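(* If $T$ is the modular tree of a finite graph $X$, then ${\rm Aut}(X)\cong{\rm Aut}(T)$, where ${\rm Aut}(T)$ consists of the automorphisms of $T$ that preserve the types of vertices (normal/marker) and of edges (normal/tree) and the orientation of tree edges.
   Context: A module of a graph $X$ is a set $M\subseteq V(X)$ such that every $x\in V(X)\setminus M$ is adjacent either to all vertices of $M$ or to none. A module is trivial if it equals $V(X)$ or has size $1$; a graph is prime if all its modules are trivial, and degenerate if it is $K_n$ or $\overline{K_n}$. Two disjoint modules are adjacent if all edges between them are present. For a modular partition $\mathcal P=\{M_1,\dots,M_k\}$ of $V(X)$, the quotient $X/\mathcal P$ has vertices $m_1,\dots,m_k$ with $m_im_j$ an edge iff $M_i,M_j$ are adjacent. Modular decomposition: if $X$ is prime or degenerate, stop; if $X$ and $\overline X$ are connected, use the partition into inclusion-maximal proper modules; if $X$ is disconnected (and $\overline X$ connected), use the connected components of $X$; if $\overline X$ is disconnected (and $X$ connected), use the connected components of $\overline X$; recurse on each part. The modular tree $T$ (with normal and marker vertices, normal edges and directed tree edges, and a root node) is defined recursively: if $X$ is prime or degenerate, $T=X$ is its own root node. Otherwise, with $\mathcal P=\{M_1,\dots,M_k\}$ the partition used and $T_i$ the modular tree of $X[M_i]$, $T$ is the disjoint union of the $T_i$ and of the quotient $X/\mathcal P$ (the root node, with marker vertices $m_1,\dots,m_k$); to each $T_i$ a new marker vertex $m_i'$ adjacent exactly to the root node of $T_i$ is added, together with a tree edge oriented from $m_i$ to $m_i'$. *)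

theory Defs
  imports "HOL-Algebra.Group"
begin

text \<open>All notions below are taken in the
 induced subgraph X[M] on a vertex subset M (edges of E between vertices of M).\<close>

definition simple_graph :: "'a set \<Rightarrow> ('a \<times> 'a) set \<Rightarrow> bool" where
  "simple_graph V E \<longleftrightarrow> E \<subseteq> V \<times> V \<and> sym E \<and> irrefl E"

definition is_module :: "('a \<times> 'a) set \<Rightarrow> 'a set \<Rightarrow> 'a set \<Rightarrow> bool" where
  "is_module E M S \<longleftrightarrow> S \<subseteq> M \<and> S \<noteq> {} \<and>
     (\<forall>x\<in>M - S. (\<forall>y\<in>S. (x, y) \<in> E) \<or> (\<forall>y\<in>S. (x, y) \<notin> E))"

definition is_prime :: "('a \<times> 'a) set \<Rightarrow> 'a set \<Rightarrow> bool" where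
  "is_prime E M \<longleftrightarrow> (\<forall>S. is_module E M S \<longrightarrow> S = M \<or> card S = 1)"

definition is_degenerate :: "('a \<times> 'a) set \<Rightarrow> 'a set \<Rightarrow> bool" where
  "is_degenerate E M \<longleftrightarrow>
     (\<forall>x\<in>M. \<forall>y\<in>M. x \<noteq> y \<longrightarrow> (x, y) \<in> E) \<or> (\<forall>x\<in>M. \<forall>y\<in>M. (x, y) \<notin> E)"

definition co_edges :: "('a \<times> 'a) set \<Rightarrow> 'a set \<Rightarrow> ('a \<times> 'a) set" where
  "co_edges E M = {(x, y). x \<in> M \<and> y \<in> M \<and> x \<noteq> y \<and> (x, y) \<notin> E}"

definition components :: "('a \<times> 'a) set \<Rightarrow> 'a set \<Rightarrow> 'a set set" where
  "components E M = {{y \<in> M. (x, y) \<in> (E \<inter> (M \<times> M))\<^sup>*} | x. x \<in> M}"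

definition connected_on :: "('a \<times> 'a) set \<Rightarrow> 'a set \<Rightarrow> bool" where
  "connected_on E M \<longleftrightarrow> components E M = {M}"

text \<open>The modular partition used by the modular decomposition of X[M]
  (empty if X[M] is prime or degenerate, i.e. no decomposition step).\<close>
definition mod_part :: "('a \<times> 'a) set \<Rightarrow> 'a set \<Rightarrow> 'a set set" where
  "mod_part E M =
    (if is_prime E M \<or> is_degenerate E M then {}
     else if connected_on E M \<and> connected_on (co_edges E M) M then
       {S. is_module E M S \<and> S \<noteq> M \<and>
           (\<forall>S'. is_module E M S' \<and> S \<subseteq> S' \<and> S' \<noteq> M \<longrightarrow> S' = S)}
     else if \<not> connected_on E M then components E M
     else components (co_edges E M) M)"

text \<open>Vertex sets of the graphs on which the recursion is run.\<close>
inductive_set dec_nodes :: "'a set \<Rightarrow> ('a \<times> 'a) set \<Rightarrow> 'a set set"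
  for V :: "'a set" and E :: "('a \<times> 'a) set" where
  root: "V \<in> dec_nodes V E"
| sub: "M \<in> dec_nodes V E \<Longrightarrow> P \<in> mod_part E M \<Longrightarrow> P \<in> dec_nodes V E"

text \<open>Vertices of the modular tree: normal vertices Inl v (v \<in> V); for every part P
  of a decomposition step, the marker Inr (P, True) (the marker m_i in the quotient)
  and the marker Inr (P, False) (the marker m_i' attached to the root node of T_i).\<close>
type_synonym 'a tvert = "'a + ('a set \<times> bool)"

definition mt_verts :: "'a set \<Rightarrow> ('a \<times> 'a) set \<Rightarrow> 'a tvert set" where
  "mt_verts V E = Inl ` V \<union> {Inr (P, b) | P b. P \<in> dec_nodes V E \<and> P \<noteq> V}"

text \<open>Vertices of the root node of the modular tree of X[M].\<close>
definition node_verts :: "('a \<times> 'a) set \<Rightarrow> 'a set \<Rightarrow> 'a tvert set" where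
  "node_verts E M =
    (if mod_part E M = {} then Inl ` M else (\<lambda>P. Inr (P, True)) ` mod_part E M)"

text \<open>Edges of the root node of the modular tree of X[M] (X[M] itself or the quotient).\<close>
definition node_edges :: "('a \<times> 'a) set \<Rightarrow> 'a set \<Rightarrow> ('a tvert \<times> 'a tvert) set" where
  "node_edges E M =
    (if mod_part E M = {} then {(Inl x, Inl y) | x y. x \<in> M \<and> y \<in> M \<and> (x, y) \<in> E}
     else {(Inr (P, True), Inr (Q, True)) | P Q. P \<in> mod_part E M \<and> Q \<in> mod_part E M
             \<and> P \<noteq> Q \<and> (\<forall>x\<in>P. \<forall>y\<in>Q. (x, y) \<in> E)})"

definition mt_normal_edges :: "'a set \<Rightarrow> ('a \<times> 'a) set \<Rightarrow> ('a tvert \<times> 'a tvert) set" where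
  "mt_normal_edges V E =
    (\<Union>M\<in>dec_nodes V E. node_edges E M \<union>
       (if M = V then {} else
          {(Inr (M, False), u) | u. u \<in> node_verts E M} \<union>
          {(u, Inr (M, False)) | u. u \<in> node_verts E M}))"

text \<open>Tree edges, oriented from m_i to m_i'.\<close>
definition mt_tree_edges :: "'a set \<Rightarrow> ('a \<times> 'a) set \<Rightarrow> ('a tvert \<times> 'a tvert) set" where
  "mt_tree_edges V E = {(Inr (P, True), Inr (P, False)) | P. P \<in> dec_nodes V E \<and> P \<noteq> V}"

definition Aut_graph :: "'a set \<Rightarrow> ('a \<times> 'a) set \<Rightarrow> ('a \<Rightarrow> 'a) monoid" where
  "Aut_graph V E = \<lparr> carrier = {f. bij_betw f V V \<and> (\<forall>x. x \<notin> V \<longrightarrow> f x = x) \<and>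
        (\<forall>x\<in>V. \<forall>y\<in>V. (x, y) \<in> E \<longleftrightarrow> (f x, f y) \<in> E)},
     mult = (\<lambda>f g. f \<circ> g), one = id \<rparr>"

definition Aut_mtree :: "'a set \<Rightarrow> ('a \<times> 'a) set \<Rightarrow> ('a tvert \<Rightarrow> 'a tvert) monoid" where
  "Aut_mtree V E = \<lparr> carrier = {f. bij_betw f (mt_verts V E) (mt_verts V E) \<and>
        (\<forall>x. x \<notin> mt_verts V E \<longrightarrow> f x = x) \<and>
        (\<forall>u\<in>mt_verts V E. isl (f u) \<longleftrightarrow> isl u) \<and>
        (\<forall>u\<in>mt_verts V E. \<forall>w\<in>mt_verts V E.
            ((u, w) \<in> mt_normal_edges V E \<longleftrightarrow> (f u, f w) \<in> mt_normal_edges V E) \<and>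
            ((u, w) \<in> mt_tree_edges V E \<longleftrightarrow> (f u, f w) \<in> mt_tree_edges V E))},
     mult = (\<lambda>f g. f \<circ> g), one = id \<rparr>"

end

theory Submission
  imports Defs "HOL-Combinatorics.Permutations"
begin

text \<open>The modular decomposition is defined canonically from the graph, so it is equivariant: a
  bijection g transports the tree of (V, E) to the tree of (g V, g E), sending v to g v and the
  markers of a part P to those of g P. Hence an automorphism f of X induces an automorphism of T.

  Conversely, a type-preserving automorphism F of T permutes the normal vertices, which gives a
  permutation f of V. Orienting T away from its root, the normal vertices below the marker m_P'
  are exactly the elements of P; as F preserves the orientation, it moves every marker the way
  f moves parts, so F is induced by f. Finally, T determines X: x and y are adjacent iff some node
  of T joins a representative of x (x itself or the marker of a part containing x) to one of y.
  As f maps T(V, E) onto T(V, f E) = T, this gives f E = E.\<close>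

section \<open>Relabelling\<close>

lemma rtrancl_map_prod_image_iff:
  assumes "inj g"
  shows "(g a, g b) \<in> (map_prod g g ` R)\<^sup>* \<longleftrightarrow> (a, b) \<in> R\<^sup>*"
proof
  have "\<exists>b. y = g b \<and> (a, b) \<in> R\<^sup>*" if "(g a, y) \<in> (map_prod g g ` R)\<^sup>*" for y
    using that
  proof (induction rule: rtrancl_induct)
    case (step y z)
    then obtain b p q where "y = g b" "(a, b) \<in> R\<^sup>*" "(p, q) \<in> R" "y = g p" "z = g q"
      by auto
    with assms show ?case
      by (metis injD rtrancl_into_rtrancl)
  qed auto
  then show "(g a, g b) \<in> (map_prod g g ` R)\<^sup>* \<Longrightarrow> (a, b) \<in> R\<^sup>*"
    using assms by (auto dest: injD)
next
  show "(a, b) \<in> R\<^sup>* \<Longrightarrow> (g a, g b) \<in> (map_prod g g ` R)\<^sup>*"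
    by (induction rule: rtrancl_induct) (auto intro: rtrancl_into_rtrancl)
qed

lemma permutes_map_prod_image_eq_iff:
  assumes p: "p permutes A" and R: "R \<subseteq> A \<times> A"
  shows "map_prod p p ` R = R \<longleftrightarrow> (\<forall>a\<in>A. \<forall>b\<in>A. (a, b) \<in> R \<longleftrightarrow> (p a, p b) \<in> R)"
proof
  assume image: "map_prod p p ` R = R"
  have inj: "inj (map_prod p p)"
    using permutes_inj[OF p] by (simp add: prod.inj_map)
  show "\<forall>a\<in>A. \<forall>b\<in>A. (a, b) \<in> R \<longleftrightarrow> (p a, p b) \<in> R"
  proof (intro ballI)
    fix a b
    have "(p a, p b) \<in> R \<longleftrightarrow> map_prod p p (a, b) \<in> map_prod p p ` R"
      by (simp add: image)
    also have "\<dots> \<longleftrightarrow> (a, b) \<in> R"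
      by (rule inj_image_mem_iff[OF inj])
    finally show "(a, b) \<in> R \<longleftrightarrow> (p a, p b) \<in> R"
      by simp
  qed
next
  assume pres: "\<forall>a\<in>A. \<forall>b\<in>A. (a, b) \<in> R \<longleftrightarrow> (p a, p b) \<in> R"
  show "map_prod p p ` R = R"
  proof (intro equalityI subsetI)
    fix r assume "r \<in> map_prod p p ` R"
    then obtain a b where ab: "(a, b) \<in> R" "r = (p a, p b)"
      by auto
    moreover have "a \<in> A" "b \<in> A"
      using ab(1) R by auto
    ultimately show "r \<in> R"
      using pres by simp
  next
    fix r assume r: "r \<in> R"
    then obtain c d where cd: "r = (c, d)" "c \<in> A" "d \<in> A"
      using R by blast
    then obtain a b where ab: "a \<in> A" "b \<in> A" "c = p a" "d = p b"
      using permutes_image[OF p] by (metis imageE)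
    then have "(a, b) \<in> R"
      using pres r cd by simp
    then show "r \<in> map_prod p p ` R"
      using ab cd by (metis map_prod_simp rev_image_eqI)
  qed
qed

lemma surj_all_image_iff: "surj g \<Longrightarrow> (\<forall>T. P T) \<longleftrightarrow> (\<forall>S. P (g ` S))"
  by (metis surj_image_vimage_eq)

lemma surj_Collect_eq_image:
  assumes "surj g" and "\<And>S. P' (g ` S) \<longleftrightarrow> P S"
  shows "{T. P' T} = (`) g ` {S. P S}"
proof (intro equalityI subsetI)
  fix T assume "T \<in> {T. P' T}"
  then have "P (g -` T)"
    using assms by (metis mem_Collect_eq surj_image_vimage_eq)
  then show "T \<in> (`) g ` {S. P S}"
    using surj_image_vimage_eq[OF assms(1)] by blast
qed (use assms in auto)

lemma bij_image_eqI:
  assumes "bij h" and "\<And>u. h u \<in> A' \<longleftrightarrow> u \<in> A"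
  shows "A' = h ` A"
proof (intro equalityI subsetI)
  fix a assume "a \<in> A'"
  moreover obtain u where "a = h u"
    using assms(1) by (metis bij_pointE)
  ultimately show "a \<in> h ` A"
    using assms(2) by blast
qed (use assms(2) in auto)

lemma bij_map_prod_image_eqI:
  assumes "bij h" and "\<And>u w. (h u, h w) \<in> R' \<longleftrightarrow> (u, w) \<in> R"
  shows "R' = map_prod h h ` R"
proof (rule bij_image_eqI)
  show "bij (map_prod h h)"
    using assms(1) by (simp add: bij_def prod.inj_map map_prod_surj)
qed (use assms(2) in auto)

section \<open>Connected components\<close>

definition component :: "('a \<times> 'a) set \<Rightarrow> 'a set \<Rightarrow> 'a \<Rightarrow> 'a set" where
  "component R M x = {y \<in> M. (x, y) \<in> (R \<inter> M \<times> M)\<^sup>*}"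

lemma components_eq_image: "components R M = component R M ` M"
  unfolding components_def component_def by blast

lemma component_subset: "component R M x \<subseteq> M"
  unfolding component_def by auto

lemma component_self: "x \<in> M \<Longrightarrow> x \<in> component R M x"
  unfolding component_def by auto

lemma component_eq:
  assumes "sym R" and "z \<in> component R M x"
  shows "component R M z = component R M x"
proof -
  have "sym (R \<inter> M \<times> M)"
    using assms(1) by (auto simp: sym_def)
  then have "sym ((R \<inter> M \<times> M)\<^sup>*)"
    by (rule sym_rtrancl)
  moreover have "(x, z) \<in> (R \<inter> M \<times> M)\<^sup>*"
    using assms(2) unfolding component_def by auto
  ultimately show ?thesis
    unfolding component_def by (meson rtrancl_trans symD)
qed

lemma component_closed:
  assumes "sym R" and "c \<in> component R M x" and "z \<in> M" and "(z, c) \<in> R"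
  shows "z \<in> component R M x"
proof -
  have "(c, z) \<in> R \<inter> M \<times> M"
    using assms component_subset by (fastforce dest: symD)
  with assms(2,3) show ?thesis
    unfolding component_def by (auto intro: rtrancl_into_rtrancl)
qed

lemma components_disjoint:
  assumes "sym R" and "C \<in> components R M" and "C' \<in> components R M" and "C \<noteq> C'"
  shows "C \<inter> C' = {}"
  using assms component_eq unfolding components_eq_image by (smt (verit) disjoint_iff imageE)

lemma components_proper:
  assumes "sym R" and "\<not> connected_on R M" and "C \<in> components R M"
  shows "C \<noteq> M"
proof
  assume "C = M"
  with assms(3) obtain x where "x \<in> M" "component R M x = M"
    unfolding components_eq_image by blast
  then have "component R M y = M" if "y \<in> M" for y
    using component_eq[OF assms(1)] that by metis
  with \<open>x \<in> M\<close> have "components R M = {M}"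
    unfolding components_eq_image by auto
  with assms(2) show False
    unfolding connected_on_def by simp
qed

lemma not_connected_onI:
  assumes "A \<subseteq> M" "A \<noteq> {}" "A \<noteq> M" and no_edge: "\<forall>a\<in>A. \<forall>b\<in>M - A. (a, b) \<notin> R"
  shows "\<not> connected_on R M"
proof
  assume "connected_on R M"
  obtain a b where a: "a \<in> A" and b: "b \<in> M" "b \<notin> A"
    using assms(1-3) by blast
  have "component R M a = M"
    using \<open>connected_on R M\<close> a assms(1) unfolding connected_on_def components_eq_image by blast
  with b have "(a, b) \<in> (R \<inter> M \<times> M)\<^sup>*"
    unfolding component_def by blast
  moreover have "y \<in> A" if "(a, y) \<in> (R \<inter> M \<times> M)\<^sup>*" for y
    using that by (induction rule: rtrancl_induct) (use a no_edge in blast)+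
  ultimately show False
    using b by blast
qed

lemma sym_co_edges: "sym E \<Longrightarrow> sym (co_edges E M)"
  unfolding sym_def co_edges_def by auto

section \<open>The modular partition\<close>

definition max_modules :: "('a \<times> 'a) set \<Rightarrow> 'a set \<Rightarrow> 'a set set" where
  "max_modules E M = {S. is_module E M S \<and> S \<noteq> M \<and>
     (\<forall>S'. is_module E M S' \<and> S \<subseteq> S' \<and> S' \<noteq> M \<longrightarrow> S' = S)}"

lemma mod_part_max_modules:
  "mod_part E M =
    (if is_prime E M \<or> is_degenerate E M then {}
     else if connected_on E M \<and> connected_on (co_edges E M) M then max_modules E M
     else if \<not> connected_on E M then components E M
     else components (co_edges E M) M)"
  unfolding mod_part_def max_modules_def ..

lemma mod_part_cases:
  assumes "mod_part E M \<noteq> {}"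
  obtains (max_modules) "\<not> is_prime E M" "connected_on E M" "connected_on (co_edges E M) M"
      "mod_part E M = max_modules E M"
  | (components) "\<not> is_prime E M" "\<not> connected_on E M" "mod_part E M = components E M"
  | (co_components) "\<not> is_prime E M" "connected_on E M" "\<not> connected_on (co_edges E M) M"
      "mod_part E M = components (co_edges E M) M"
  using assms that unfolding mod_part_max_modules by (auto split: if_splits)

lemma component_is_module:
  assumes "sym E" and "C \<in> components E M"
  shows "is_module E M C"
proof -
  obtain x where x: "x \<in> M" "C = component E M x"
    using assms(2) unfolding components_eq_image by blast
  then have "(z, c) \<notin> E" if "z \<in> M - C" "c \<in> C" for z c
    using component_closed[OF assms(1)] that by blast
  with x component_subset component_self show ?thesis
    unfolding is_module_def by fastforce
qed

lemma co_component_is_module: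
  assumes "sym E" and "C \<in> components (co_edges E M) M"
  shows "is_module E M C"
proof -
  obtain x where x: "x \<in> M" "C = component (co_edges E M) M x"
    using assms(2) unfolding components_eq_image by blast
  have "(z, c) \<in> E" if "z \<in> M - C" "c \<in> C" for z c
  proof (rule ccontr)
    assume "(z, c) \<notin> E"
    with that x component_subset have "(z, c) \<in> co_edges E M"
      unfolding co_edges_def by fastforce
    with that x have "z \<in> C"
      using component_closed[OF sym_co_edges[OF assms(1)]] by blast
    with that show False
      by blast
  qed
  with x component_subset component_self show ?thesis
    unfolding is_module_def by fastforce
qed

lemma mod_part_proper_module:
  assumes "sym E" and "P \<in> mod_part E M"
  shows "is_module E M P" and "P \<noteq> M"
proof -
  from assms(2) have "mod_part E M \<noteq> {}"
    by blast
  then have "is_module E M P \<and> P \<noteq> M"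
  proof (cases rule: mod_part_cases)
    case max_modules
    then show ?thesis
      using assms(2) unfolding max_modules_def by blast
  next
    case components
    then show ?thesis
      using assms component_is_module components_proper by fastforce
  next
    case co_components
    then show ?thesis
      using assms co_component_is_module components_proper[OF sym_co_edges] by fastforce
  qed
  then show "is_module E M P" and "P \<noteq> M"
    by auto
qed

lemma mod_part_psubset: "sym E \<Longrightarrow> P \<in> mod_part E M \<Longrightarrow> P \<subset> M"
  using mod_part_proper_module unfolding is_module_def by blast

lemma mod_part_cover:
  assumes "finite M" and "mod_part E M \<noteq> {}" and "x \<in> M"
  shows "\<exists>P\<in>mod_part E M. x \<in> P"
  using assms(2)
proof (cases rule: mod_part_cases)
  case max_modules
  let ?Q = "\<lambda>S. is_module E M S \<and> S \<noteq> M \<and> x \<in> S"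
  have "{x} \<noteq> M"
  proof
    assume "{x} = M"
    then have "is_prime E M"
      unfolding is_prime_def is_module_def by (auto simp: subset_singleton_iff)
    with max_modules(1) show False
      by contradiction
  qed
  with assms(3) have "?Q {x}"
    unfolding is_module_def by auto
  moreover have "\<forall>S. ?Q S \<longrightarrow> card S < Suc (card M)"
    using assms(1) unfolding is_module_def by (simp add: card_mono le_imp_less_Suc)
  ultimately obtain S where S: "?Q S" "\<forall>S'. ?Q S' \<longrightarrow> card S' \<le> card S"
    using ex_has_greatest_nat[of ?Q "{x}" card "Suc (card M)"] by blast
  have "S' = S" if "is_module E M S'" "S \<subseteq> S'" "S' \<noteq> M" for S'
  proof -
    have "finite S'"
      using that(1) assms(1) unfolding is_module_def by (meson finite_subset)
    moreover have "card S' \<le> card S"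
      using S that by blast
    ultimately show ?thesis
      using card_seteq[of S' S] that(2) by blast
  qed
  with S have "S \<in> max_modules E M"
    unfolding max_modules_def by blast
  with max_modules S show ?thesis
    by blast
next
  case components
  then show ?thesis
    using component_self[OF assms(3)] assms(3) by (auto simp: components_eq_image)
next
  case co_components
  then show ?thesis
    using component_self[OF assms(3)] assms(3) by (auto simp: components_eq_image)
qed

lemma is_module_Un:
  assumes "is_module E M S1" and "is_module E M S2" and "S1 \<inter> S2 \<noteq> {}"
  shows "is_module E M (S1 \<union> S2)"
  unfolding is_module_def
proof (intro conjI ballI)
  show "S1 \<union> S2 \<subseteq> M" "S1 \<union> S2 \<noteq> {}"
    using assms(1,2) unfolding is_module_def by auto
  fix z assume "z \<in> M - (S1 \<union> S2)"
  then have "(\<forall>y\<in>S1. (z, y) \<in> E) \<or> (\<forall>y\<in>S1. (z, y) \<notin> E)"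
    and "(\<forall>y\<in>S2. (z, y) \<in> E) \<or> (\<forall>y\<in>S2. (z, y) \<notin> E)"
    using assms(1,2) unfolding is_module_def by auto
  with assms(3) show "(\<forall>y\<in>S1 \<union> S2. (z, y) \<in> E) \<or> (\<forall>y\<in>S1 \<union> S2. (z, y) \<notin> E)"
    by blast
qed

lemma covering_modules_edge_iff:
  assumes "sym E" and S1: "is_module E M S1" and S2: "is_module E M S2" and "S1 \<union> S2 = M"
    and "x \<in> S1 - S2" "y \<in> S2 - S1" "a \<in> S1 - S2" "b \<in> S2"
  shows "(a, b) \<in> E \<longleftrightarrow> (x, y) \<in> E"
proof -
  have "(a, b) \<in> E \<longleftrightarrow> (a, y) \<in> E"
    using S2 assms(4-8) unfolding is_module_def by blast
  also have "\<dots> \<longleftrightarrow> (y, a) \<in> E"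
    using assms(1) by (auto dest: symD)
  also have "\<dots> \<longleftrightarrow> (y, x) \<in> E"
    using S1 assms(4-8) unfolding is_module_def by blast
  also have "\<dots> \<longleftrightarrow> (x, y) \<in> E"
    using assms(1) by (auto dest: symD)
  finally show ?thesis .
qed

text \<open>Overlapping maximal modules would cover M; then S1 - S2 is joined either to all or to none
  of its complement S2, so X or its complement would be disconnected.\<close>
lemma max_modules_disjoint:
  assumes "sym E" and conn: "connected_on E M" and co_conn: "connected_on (co_edges E M) M"
    and S1: "S1 \<in> max_modules E M" and S2: "S2 \<in> max_modules E M" and "S1 \<noteq> S2"
  shows "S1 \<inter> S2 = {}"
proof (rule ccontr)
  assume "S1 \<inter> S2 \<noteq> {}"
  have m1: "is_module E M S1" and m2: "is_module E M S2"
    and max1: "\<And>S'. is_module E M S' \<Longrightarrow> S1 \<subseteq> S' \<Longrightarrow> S' \<noteq> M \<Longrightarrow> S' = S1"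
    and max2: "\<And>S'. is_module E M S' \<Longrightarrow> S2 \<subseteq> S' \<Longrightarrow> S' \<noteq> M \<Longrightarrow> S' = S2"
    using S1 S2 unfolding max_modules_def by auto
  have cover: "S1 \<union> S2 = M"
  proof (rule ccontr)
    assume "S1 \<union> S2 \<noteq> M"
    with is_module_Un[OF m1 m2 \<open>S1 \<inter> S2 \<noteq> {}\<close>] have "S1 \<union> S2 = S1" "S1 \<union> S2 = S2"
      using max1 max2 by auto
    with \<open>S1 \<noteq> S2\<close> show False
      by blast
  qed
  have "\<not> S1 \<subseteq> S2" "\<not> S2 \<subseteq> S1"
    using max1[OF m2] max2[OF m1] S1 S2 \<open>S1 \<noteq> S2\<close> unfolding max_modules_def by auto
  then obtain x y where x: "x \<in> S1 - S2" and y: "y \<in> S2 - S1"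
    by blast
  have uniform: "\<forall>a\<in>S1 - S2. \<forall>b\<in>M - (S1 - S2). (a, b) \<in> E \<longleftrightarrow> (x, y) \<in> E"
    using covering_modules_edge_iff[OF assms(1) m1 m2 cover x y] cover by blast
  have A: "S1 - S2 \<subseteq> M" "S1 - S2 \<noteq> {}" "S1 - S2 \<noteq> M"
    using x y m1 m2 unfolding is_module_def by auto
  show False
  proof (cases "(x, y) \<in> E")
    case True
    with uniform have "\<forall>a\<in>S1 - S2. \<forall>b\<in>M - (S1 - S2). (a, b) \<notin> co_edges E M"
      unfolding co_edges_def by blast
    with not_connected_onI[OF A] co_conn show False
      by blast
  next
    case False
    with uniform have "\<forall>a\<in>S1 - S2. \<forall>b\<in>M - (S1 - S2). (a, b) \<notin> E"
      by blast
    with not_connected_onI[OF A] conn show False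
      by blast
  qed
qed

lemma disjoint_modules_adjacent:
  assumes "sym E" and P: "is_module E M P" and Q: "is_module E M Q" and "P \<inter> Q = {}"
    and "x \<in> P" "y \<in> Q" "(x, y) \<in> E"
  shows "\<forall>p\<in>P. \<forall>q\<in>Q. (p, q) \<in> E"
proof (intro ballI)
  fix p q assume "p \<in> P" "q \<in> Q"
  have "y \<in> M - P" "p \<in> M - Q"
    using assms \<open>p \<in> P\<close> unfolding is_module_def by auto
  have "(y, x) \<in> E"
    using assms(1,7) by (rule symD)
  with P \<open>y \<in> M - P\<close> \<open>x \<in> P\<close> \<open>p \<in> P\<close> have "(y, p) \<in> E"
    unfolding is_module_def by blast
  then have "(p, y) \<in> E"
    by (rule symD[OF assms(1)])
  with Q \<open>p \<in> M - Q\<close> \<open>y \<in> Q\<close> \<open>q \<in> Q\<close> show "(p, q) \<in> E"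
    unfolding is_module_def by blast
qed

lemma mod_part_disjoint:
  assumes "sym E" and "P \<in> mod_part E M" and "Q \<in> mod_part E M" and "P \<noteq> Q"
  shows "P \<inter> Q = {}"
proof -
  from assms(2) have "mod_part E M \<noteq> {}"
    by blast
  then show ?thesis
  proof (cases rule: mod_part_cases)
    case max_modules
    then show ?thesis
      using max_modules_disjoint[OF assms(1) max_modules(2,3)] assms(2-4) max_modules(4) by simp
  next
    case components
    then show ?thesis
      using components_disjoint[OF assms(1)] assms(2-4) by simp
  next
    case co_components
    then show ?thesis
      using components_disjoint[OF sym_co_edges[OF assms(1)]] assms(2-4) by simp
  qed
qed

section \<open>Equivariance of the modular tree\<close>

definition tvert_map :: "('a \<Rightarrow> 'a) \<Rightarrow> 'a tvert \<Rightarrow> 'a tvert" where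
  "tvert_map g = map_sum g (\<lambda>(P, b). (g ` P, b))"

lemma tvert_map_simps [simp]:
  "tvert_map g (Inl v) = Inl (g v)"
  "tvert_map g (Inr (P, b)) = Inr (g ` P, b)"
  by (simp_all add: tvert_map_def)

lemma isl_tvert_map [simp]: "isl (tvert_map g u) \<longleftrightarrow> isl u"
  by (cases u) auto

lemma tvert_map_comp: "tvert_map (f \<circ> g) u = tvert_map f (tvert_map g u)"
  by (cases u) (auto simp: image_comp)

lemma bij_tvert_map:
  assumes "bij g"
  shows "bij (tvert_map g)"
proof (rule bijI)
  show "inj (tvert_map g)"
  proof (rule injI)
    fix u w assume "tvert_map g u = tvert_map g w"
    then show "u = w"
      using bij_is_inj[OF assms] by (cases u; cases w) (auto simp: inj_eq inj_image_eq_iff)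
  qed
  show "surj (tvert_map g)"
  proof (rule surjI)
    fix u show "tvert_map g (tvert_map (inv_into UNIV g) u) = u"
      using assms by (cases u) (auto simp: image_comp bij_is_surj surj_f_inv_f)
  qed
qed

context
  fixes g :: "'a \<Rightarrow> 'a"
  assumes bij: "bij g"
begin

private lemma inj: "inj g"
  using bij by (rule bij_is_inj)

private lemma inj_image: "inj ((`) g)"
  using inj by (simp add: inj_on_image)

private lemma map_prod_image_mem_iff: "(g a, g b) \<in> map_prod g g ` R \<longleftrightarrow> (a, b) \<in> R"
  using inj by (auto dest: injD)

lemma is_module_image: "is_module (map_prod g g ` E) (g ` M) (g ` S) \<longleftrightarrow> is_module E M S"
  unfolding is_module_def using inj
  by (auto simp: image_set_diff[OF inj, symmetric] map_prod_image_mem_iff inj_image_subset_iff)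

lemma is_prime_image: "is_prime (map_prod g g ` E) (g ` M) \<longleftrightarrow> is_prime E M"
  unfolding is_prime_def
  by (subst surj_all_image_iff[OF bij_is_surj[OF bij]])
    (simp add: is_module_image inj_image_eq_iff[OF inj] card_image[OF inj_on_subset[OF inj]])

lemma is_degenerate_image: "is_degenerate (map_prod g g ` E) (g ` M) \<longleftrightarrow> is_degenerate E M"
  unfolding is_degenerate_def using inj by (auto simp: map_prod_image_mem_iff inj_eq)

lemma co_edges_image: "co_edges (map_prod g g ` E) (g ` M) = map_prod g g ` co_edges E M"
  unfolding co_edges_def using inj by (auto simp: map_prod_image_mem_iff inj_eq)

lemma component_image:
  "component (map_prod g g ` R) (g ` M) (g x) = g ` component R M x"
proof -
  have "map_prod g g ` R \<inter> g ` M \<times> g ` M = map_prod g g ` (R \<inter> M \<times> M)"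
    using inj by (auto simp: inj_eq)
  then show ?thesis
    unfolding component_def using rtrancl_map_prod_image_iff[OF inj] by auto
qed

lemma components_image: "components (map_prod g g ` R) (g ` M) = (`) g ` components R M"
  unfolding components_eq_image image_image component_image ..

lemma connected_on_image: "connected_on (map_prod g g ` R) (g ` M) \<longleftrightarrow> connected_on R M"
  unfolding connected_on_def components_image
  using inj_image_eq_iff[OF inj_image, of _ "{M}"] by simp

lemma max_modules_image: "max_modules (map_prod g g ` E) (g ` M) = (`) g ` max_modules E M"
  unfolding max_modules_def
  by (rule surj_Collect_eq_image[OF bij_is_surj[OF bij]], subst surj_all_image_iff[OF bij_is_surj[OF bij]])
    (simp add: is_module_image inj_image_subset_iff[OF inj] inj_image_eq_iff[OF inj])

lemma mod_part_image: "mod_part (map_prod g g ` E) (g ` M) = (`) g ` mod_part E M"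
  unfolding mod_part_max_modules
  by (simp add: is_prime_image is_degenerate_image co_edges_image connected_on_image
      components_image max_modules_image)

lemma dec_nodes_image: "dec_nodes (g ` V) (map_prod g g ` E) = (`) g ` dec_nodes V E"
proof (intro equalityI subsetI)
  fix M assume "M \<in> dec_nodes (g ` V) (map_prod g g ` E)"
  then show "M \<in> (`) g ` dec_nodes V E"
  proof (induction rule: dec_nodes.induct)
    case (sub M P)
    then obtain M0 where "M = g ` M0" "M0 \<in> dec_nodes V E"
      by blast
    with sub.hyps(2) show ?case
      by (auto simp: mod_part_image intro: dec_nodes.sub)
  qed (blast intro: dec_nodes.root)
next
  fix M assume "M \<in> (`) g ` dec_nodes V E"
  then obtain M0 where M0: "M = g ` M0" "M0 \<in> dec_nodes V E"
    by blast
  from M0(2) have "g ` M0 \<in> dec_nodes (g ` V) (map_prod g g ` E)"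
  proof (induction rule: dec_nodes.induct)
    case (sub M P)
    then show ?case
      by (auto simp: mod_part_image intro: dec_nodes.sub)
  qed (rule dec_nodes.root)
  with M0(1) show "M \<in> dec_nodes (g ` V) (map_prod g g ` E)"
    by simp
qed

lemma node_verts_image: "node_verts (map_prod g g ` E) (g ` M) = tvert_map g ` node_verts E M"
  unfolding node_verts_def mod_part_image by (auto simp: image_image)

lemma node_edges_image:
  "node_edges (map_prod g g ` E) (g ` M) = map_prod (tvert_map g) (tvert_map g) ` node_edges E M"
proof (rule bij_map_prod_image_eqI[OF bij_tvert_map[OF bij]])
  fix u w :: "'a tvert"
  show "(tvert_map g u, tvert_map g w) \<in> node_edges (map_prod g g ` E) (g ` M) \<longleftrightarrow>
      (u, w) \<in> node_edges E M"
    unfolding node_edges_def mod_part_image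
    by (cases u; cases w)
      (auto simp: map_prod_image_mem_iff inj_image_mem_iff[OF inj] inj_image_mem_iff[OF inj_image]
        inj_image_eq_iff[OF inj])
qed

lemma mt_verts_image: "mt_verts (g ` V) (map_prod g g ` E) = tvert_map g ` mt_verts V E"
proof (rule bij_image_eqI[OF bij_tvert_map[OF bij]])
  fix u :: "'a tvert"
  show "tvert_map g u \<in> mt_verts (g ` V) (map_prod g g ` E) \<longleftrightarrow> u \<in> mt_verts V E"
    unfolding mt_verts_def dec_nodes_image
    by (cases u) (auto simp: inj_image_mem_iff[OF inj] inj_image_mem_iff[OF inj_image]
        inj_image_eq_iff[OF inj] inj_eq[OF inj])
qed

lemma mt_tree_edges_image:
  "mt_tree_edges (g ` V) (map_prod g g ` E) = map_prod (tvert_map g) (tvert_map g) ` mt_tree_edges V E"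
proof (rule bij_map_prod_image_eqI[OF bij_tvert_map[OF bij]])
  fix u w :: "'a tvert"
  show "(tvert_map g u, tvert_map g w) \<in> mt_tree_edges (g ` V) (map_prod g g ` E) \<longleftrightarrow>
      (u, w) \<in> mt_tree_edges V E"
    unfolding mt_tree_edges_def dec_nodes_image
    by (cases u; cases w) (auto simp: inj_image_mem_iff[OF inj_image] inj_image_eq_iff[OF inj])
qed

lemma mt_normal_edges_image:
  "mt_normal_edges (g ` V) (map_prod g g ` E) =
    map_prod (tvert_map g) (tvert_map g) ` mt_normal_edges V E"
proof -
  have out: "{(Inr (M, False), u) | u. u \<in> A} = (\<lambda>u. (Inr (M, False), u)) ` A"
    and into: "{(u, Inr (M, False)) | u. u \<in> A} = (\<lambda>u. (u, Inr (M, False))) ` A"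
    for M :: "'a set" and A :: "'a tvert set"
    by auto
  have "node_edges (map_prod g g ` E) (g ` M) \<union>
      (if g ` M = g ` V then {} else
        (\<lambda>u. (Inr (g ` M, False), u)) ` node_verts (map_prod g g ` E) (g ` M) \<union>
        (\<lambda>u. (u, Inr (g ` M, False))) ` node_verts (map_prod g g ` E) (g ` M)) =
    map_prod (tvert_map g) (tvert_map g) ` (node_edges E M \<union>
      (if M = V then {} else
        (\<lambda>u. (Inr (M, False), u)) ` node_verts E M \<union> (\<lambda>u. (u, Inr (M, False))) ` node_verts E M))"
    for M
    by (simp add: node_edges_image node_verts_image image_Un image_image inj_image_eq_iff[OF inj])
  then show ?thesis
    unfolding mt_normal_edges_def dec_nodes_image image_UN out into image_image
    by simp
qed

end

section \<open>Shape of the modular tree\<close>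

lemma node_verts_cases:
  "u \<in> node_verts E M \<Longrightarrow>
    (\<exists>x\<in>M. u = Inl x \<and> mod_part E M = {}) \<or> (\<exists>Q\<in>mod_part E M. u = Inr (Q, True))"
  unfolding node_verts_def by (auto split: if_splits)

lemma node_edges_cases:
  "(a, b) \<in> node_edges E M \<Longrightarrow>
    (\<exists>x y. a = Inl x \<and> b = Inl y \<and> (x, y) \<in> E \<and> mod_part E M = {}) \<or>
    (\<exists>P Q. a = Inr (P, True) \<and> b = Inr (Q, True) \<and> (\<forall>x\<in>P. \<forall>y\<in>Q. (x, y) \<in> E))"
  unfolding node_edges_def by (auto split: if_splits)

lemma node_edges_subset: "node_edges E M \<subseteq> node_verts E M \<times> node_verts E M"
  unfolding node_edges_def node_verts_def by auto

lemma mem_mt_tree_edges_iff: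
  "(a, b) \<in> mt_tree_edges V E \<longleftrightarrow>
    (\<exists>P. P \<in> dec_nodes V E \<and> P \<noteq> V \<and> a = Inr (P, True) \<and> b = Inr (P, False))"
  unfolding mt_tree_edges_def by blast

lemma mem_mt_normal_edges_iff:
  "(a, b) \<in> mt_normal_edges V E \<longleftrightarrow>
    (\<exists>M\<in>dec_nodes V E. (a, b) \<in> node_edges E M \<or>
      (M \<noteq> V \<and> (a = Inr (M, False) \<and> b \<in> node_verts E M \<or> b = Inr (M, False) \<and> a \<in> node_verts E M)))"
  unfolding mt_normal_edges_def by (auto split: if_splits)

lemma Inl_mem_mt_verts_iff: "Inl v \<in> mt_verts V E \<longleftrightarrow> v \<in> V"
  unfolding mt_verts_def by blast

lemma Inr_mem_mt_verts_iff: "Inr (P, b) \<in> mt_verts V E \<longleftrightarrow> P \<in> dec_nodes V E \<and> P \<noteq> V"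
  unfolding mt_verts_def by blast

lemma mt_tree_edges_subset: "mt_tree_edges V E \<subseteq> mt_verts V E \<times> mt_verts V E"
  unfolding mt_tree_edges_def mt_verts_def by blast

text \<open>Orienting the tree away from its root: the tree edges m_i \<rightarrow> m_i', and the normal edges
  from a marker m_i' into the root node of T_i.\<close>
definition mt_down_edges :: "'a set \<Rightarrow> ('a \<times> 'a) set \<Rightarrow> ('a tvert \<times> 'a tvert) set" where
  "mt_down_edges V E =
    mt_tree_edges V E \<union> {(a, b) \<in> mt_normal_edges V E. a \<in> Range (mt_tree_edges V E)}"

lemma Inl_not_mt_down_edge: "(Inl x, b) \<notin> mt_down_edges V E"
  by (auto simp: mt_down_edges_def mem_mt_tree_edges_iff)

lemma marker_mt_down_edge_iff:
  "(Inr (Q, True), b) \<in> mt_down_edges V E \<longleftrightarrow> Q \<in> dec_nodes V E \<and> Q \<noteq> V \<and> b = Inr (Q, False)"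
  by (auto simp: mt_down_edges_def mem_mt_tree_edges_iff)

lemma attached_marker_mt_down_edge_iff:
  assumes "P \<in> dec_nodes V E" and "P \<noteq> V"
  shows "(Inr (P, False), b) \<in> mt_down_edges V E \<longleftrightarrow> b \<in> node_verts E P"
proof -
  have "Inr (P, False) \<notin> node_verts E M" for M
    using node_verts_cases by fastforce
  then have "(Inr (P, False), b) \<in> mt_normal_edges V E \<longleftrightarrow> b \<in> node_verts E P"
    using assms node_edges_subset unfolding mem_mt_normal_edges_iff by blast
  moreover have "Inr (P, False) \<in> Range (mt_tree_edges V E)"
    using assms unfolding mt_tree_edges_def by blast
  ultimately show ?thesis
    by (auto simp: mt_down_edges_def mem_mt_tree_edges_iff)
qed

definition tree_reps :: "'a tvert set \<Rightarrow> 'a \<Rightarrow> 'a tvert set" where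
  "tree_reps T x = {u \<in> T. u = Inl x \<or> (\<exists>Q. u = Inr (Q, True) \<and> x \<in> Q)}"

lemma edge_if_adjacent_reps:
  assumes "a \<in> tree_reps (mt_verts V E) x" and "b \<in> tree_reps (mt_verts V E) y"
    and "(a, b) \<in> mt_normal_edges V E"
  shows "(x, y) \<in> E"
proof -
  have "a \<noteq> Inr (Q, False)" "b \<noteq> Inr (Q, False)" for Q
    using assms(1,2) unfolding tree_reps_def by auto
  then obtain M where "(a, b) \<in> node_edges E M"
    using assms(3) unfolding mem_mt_normal_edges_iff by blast
  from node_edges_cases[OF this] show ?thesis
    using assms(1,2) unfolding tree_reps_def by auto
qed

context
  fixes V :: "'a set" and E :: "('a \<times> 'a) set"
  assumes finite: "finite V" and graph: "simple_graph V E"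
begin

private lemma sym: "sym E"
  using graph unfolding simple_graph_def by blast

lemma dec_nodes_subset: "M \<in> dec_nodes V E \<Longrightarrow> M \<subseteq> V"
  by (induction rule: dec_nodes.induct) (use mod_part_psubset[OF sym] in blast)+

lemma mod_part_dec_nodes:
  assumes "M \<in> dec_nodes V E" and "Q \<in> mod_part E M"
  shows "Q \<in> dec_nodes V E" "Q \<noteq> V" "Q \<subset> M"
  using dec_nodes.sub[OF assms] mod_part_psubset[OF sym assms(2)] dec_nodes_subset[OF assms(1)]
  by auto

lemma node_verts_subset:
  assumes "M \<in> dec_nodes V E"
  shows "node_verts E M \<subseteq> mt_verts V E"
proof
  fix u assume "u \<in> node_verts E M"
  from node_verts_cases[OF this] show "u \<in> mt_verts V E"
    using dec_nodes_subset[OF assms] mod_part_dec_nodes[OF assms]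
    by (auto simp: Inl_mem_mt_verts_iff Inr_mem_mt_verts_iff)
qed

lemma mt_normal_edges_subset: "mt_normal_edges V E \<subseteq> mt_verts V E \<times> mt_verts V E"
proof (clarify)
  fix a b assume "(a, b) \<in> mt_normal_edges V E"
  then obtain M where M: "M \<in> dec_nodes V E" and "(a, b) \<in> node_edges E M \<or>
      (M \<noteq> V \<and> (a = Inr (M, False) \<and> b \<in> node_verts E M \<or> b = Inr (M, False) \<and> a \<in> node_verts E M))"
    unfolding mem_mt_normal_edges_iff by blast
  moreover note node_edges_subset[of E M] node_verts_subset[OF M]
  moreover have "M \<noteq> V \<Longrightarrow> Inr (M, False) \<in> mt_verts V E"
    using M by (simp add: Inr_mem_mt_verts_iff)
  ultimately show "a \<in> mt_verts V E \<and> b \<in> mt_verts V E"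
    by blast
qed

lemma mt_down_reach_subset:
  assumes "P \<in> dec_nodes V E" and "P \<noteq> V" and "(Inr (P, False), w) \<in> (mt_down_edges V E)\<^sup>*"
  shows "w \<in> Inl ` P \<union> {Inr (Q, c) | Q c. Q \<in> dec_nodes V E \<and> Q \<subseteq> P \<and> Q \<noteq> V}"
  using assms(3)
proof (induction rule: rtrancl_induct)
  case base
  then show ?case
    using assms(1,2) by blast
next
  case (step w w')
  from step.IH consider (leaf) x where "w = Inl x"
    | (marker) Q c where "w = Inr (Q, c)" "Q \<in> dec_nodes V E" "Q \<subseteq> P" "Q \<noteq> V"
    by blast
  then show ?case
  proof cases
    case leaf
    then show ?thesis
      using step.hyps(2) Inl_not_mt_down_edge[of x w' V E] by simp
  next
    case marker
    show ?thesis
    proof (cases c)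
      case True
      with step.hyps(2) marker have "w' = Inr (Q, False)"
        by (simp add: marker_mt_down_edge_iff)
      with marker show ?thesis
        by blast
    next
      case False
      with step.hyps(2) marker have "w' \<in> node_verts E Q"
        using attached_marker_mt_down_edge_iff[OF marker(2,4)] by simp
      from node_verts_cases[OF this] consider (leaf) x where "x \<in> Q" "w' = Inl x"
        | (part) Q' where "Q' \<in> mod_part E Q" "w' = Inr (Q', True)"
        by blast
      then show ?thesis
      proof cases
        case leaf
        with marker(3) show ?thesis
          by blast
      next
        case part
        with mod_part_dec_nodes[OF marker(2) part(1)] marker(3) show ?thesis
          by blast
      qed
    qed
  qed
qed

lemma mt_down_reach_subset_Inl:
  assumes "P \<in> dec_nodes V E" and "P \<noteq> V" and "(Inr (P, False), Inl v) \<in> (mt_down_edges V E)\<^sup>*"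
  shows "v \<in> P"
  using mt_down_reach_subset[OF assms] by blast

lemma mt_down_reach_Inl:
  assumes "P \<in> dec_nodes V E" and "P \<noteq> V" and "v \<in> P"
  shows "(Inr (P, False), Inl v) \<in> (mt_down_edges V E)\<^sup>*"
proof -
  have "finite P"
    using dec_nodes_subset[OF assms(1)] finite finite_subset by blast
  then show ?thesis
    using assms
  proof (induction P rule: finite_psubset_induct)
    case (psubset P)
    show ?case
    proof (cases "mod_part E P = {}")
      case True
      with psubset.prems have "(Inr (P, False), Inl v) \<in> mt_down_edges V E"
        by (simp add: attached_marker_mt_down_edge_iff node_verts_def)
      then show ?thesis
        by blast
    next
      case False
      then obtain Q where Q: "Q \<in> mod_part E P" "v \<in> Q"
        using mod_part_cover[OF psubset.hyps(1) _ psubset.prems(3)] by blast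
      note Q_dec = mod_part_dec_nodes[OF psubset.prems(1) Q(1)]
      have "(Inr (P, False), Inr (Q, True)) \<in> mt_down_edges V E"
        using False Q(1) psubset.prems(1,2) by (simp add: attached_marker_mt_down_edge_iff node_verts_def)
      moreover have "(Inr (Q, True), Inr (Q, False)) \<in> mt_down_edges V E"
        using Q_dec by (simp add: marker_mt_down_edge_iff)
      moreover have "(Inr (Q, False), Inl v) \<in> (mt_down_edges V E)\<^sup>*"
        using psubset.IH[OF Q_dec(3,1,2) Q(2)] .
      ultimately show ?thesis
        by (meson converse_rtrancl_into_rtrancl)
    qed
  qed
qed

lemma mt_down_reach_Inl_iff:
  assumes "P \<in> dec_nodes V E" and "P \<noteq> V"
  shows "(Inr (P, False), Inl v) \<in> (mt_down_edges V E)\<^sup>* \<longleftrightarrow> v \<in> P"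
  using mt_down_reach_subset_Inl[OF assms] mt_down_reach_Inl[OF assms] by blast

lemma adjacent_reps_if_edge:
  assumes "M \<in> dec_nodes V E" and "x \<in> M" and "y \<in> M" and "(x, y) \<in> E"
  shows "\<exists>a\<in>tree_reps (mt_verts V E) x. \<exists>b\<in>tree_reps (mt_verts V E) y. (a, b) \<in> mt_normal_edges V E"
proof -
  have "finite M"
    using dec_nodes_subset[OF assms(1)] finite finite_subset by blast
  then show ?thesis
    using assms
  proof (induction M rule: finite_psubset_induct)
    case (psubset M)
    show ?case
    proof (cases "mod_part E M = {}")
      case True
      with psubset.prems(2-4) have "(Inl x, Inl y) \<in> node_edges E M"
        unfolding node_edges_def by simp
      then have "(Inl x, Inl y) \<in> mt_normal_edges V E"
        using psubset.prems(1) unfolding mem_mt_normal_edges_iff by blast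
      moreover have "Inl x \<in> tree_reps (mt_verts V E) x" "Inl y \<in> tree_reps (mt_verts V E) y"
        using psubset.prems(2,3) dec_nodes_subset[OF psubset.prems(1)]
        by (auto simp: tree_reps_def Inl_mem_mt_verts_iff)
      ultimately show ?thesis
        by blast
    next
      case False
      obtain P Q where P: "P \<in> mod_part E M" "x \<in> P" and Q: "Q \<in> mod_part E M" "y \<in> Q"
        using mod_part_cover[OF psubset.hyps(1) False] psubset.prems(2,3) by meson
      note P_dec = mod_part_dec_nodes[OF psubset.prems(1) P(1)]
      note Q_dec = mod_part_dec_nodes[OF psubset.prems(1) Q(1)]
      show ?thesis
      proof (cases "P = Q")
        case True
        then show ?thesis
          using psubset.IH[OF P_dec(3,1) P(2)] Q(2) psubset.prems(4) by blast
      next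
        case False
        have "\<forall>p\<in>P. \<forall>q\<in>Q. (p, q) \<in> E"
          using disjoint_modules_adjacent[OF sym mod_part_proper_module(1)[OF sym P(1)]
              mod_part_proper_module(1)[OF sym Q(1)] mod_part_disjoint[OF sym P(1) Q(1) False]
              P(2) Q(2) psubset.prems(4)] .
        with \<open>mod_part E M \<noteq> {}\<close> P(1) Q(1) False
        have "(Inr (P, True), Inr (Q, True)) \<in> node_edges E M"
          unfolding node_edges_def by auto
        then have "(Inr (P, True), Inr (Q, True)) \<in> mt_normal_edges V E"
          using psubset.prems(1) unfolding mem_mt_normal_edges_iff by blast
        moreover have "Inr (P, True) \<in> tree_reps (mt_verts V E) x"
          "Inr (Q, True) \<in> tree_reps (mt_verts V E) y"
          using P Q P_dec Q_dec by (auto simp: tree_reps_def Inr_mem_mt_verts_iff)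
        ultimately show ?thesis
          by blast
      qed
    qed
  qed
qed

lemma edge_iff_adjacent_reps:
  assumes "x \<in> V" and "y \<in> V"
  shows "(x, y) \<in> E \<longleftrightarrow>
    (\<exists>a\<in>tree_reps (mt_verts V E) x. \<exists>b\<in>tree_reps (mt_verts V E) y. (a, b) \<in> mt_normal_edges V E)"
    (is "_ \<longleftrightarrow> ?rhs")
proof
  show "(x, y) \<in> E \<Longrightarrow> ?rhs"
    by (rule adjacent_reps_if_edge[OF dec_nodes.root assms])
  show "?rhs \<Longrightarrow> (x, y) \<in> E"
    using edge_if_adjacent_reps by metis
qed

end

lemma mt_determines_edges:
  assumes "finite V" and "simple_graph V E" and "simple_graph V E'"
    and "mt_verts V E' = mt_verts V E" and "mt_normal_edges V E' = mt_normal_edges V E"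
  shows "E' = E"
proof -
  have same: "(x, y) \<in> E' \<longleftrightarrow> (x, y) \<in> E" if "x \<in> V" "y \<in> V" for x y
    unfolding edge_iff_adjacent_reps[OF assms(1) assms(2) that]
      edge_iff_adjacent_reps[OF assms(1) assms(3) that] assms(4,5) ..
  have "E \<subseteq> V \<times> V" "E' \<subseteq> V \<times> V"
    using assms(2,3) unfolding simple_graph_def by auto
  with same show ?thesis
    by (intro equalityI subrelI) blast+
qed

section \<open>Automorphisms of the graph and of its modular tree\<close>

lemma permutes_iff_bij_betw: "p permutes A \<longleftrightarrow> bij_betw p A A \<and> (\<forall>x. x \<notin> A \<longrightarrow> p x = x)"
  by (auto simp: permutes_altdef)

lemma Aut_graph_carrier_iff:
  assumes "E \<subseteq> V \<times> V"
  shows "f \<in> carrier (Aut_graph V E) \<longleftrightarrow> f permutes V \<and> map_prod f f ` E = E"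
proof -
  have "f \<in> carrier (Aut_graph V E) \<longleftrightarrow>
      f permutes V \<and> (\<forall>x\<in>V. \<forall>y\<in>V. (x, y) \<in> E \<longleftrightarrow> (f x, f y) \<in> E)"
    unfolding Aut_graph_def permutes_iff_bij_betw by auto
  then show ?thesis
    using permutes_map_prod_image_eq_iff[OF _ assms] by blast
qed

lemma Aut_mtree_carrier_iff:
  assumes "mt_normal_edges V E \<subseteq> mt_verts V E \<times> mt_verts V E"
    and "mt_tree_edges V E \<subseteq> mt_verts V E \<times> mt_verts V E"
  shows "F \<in> carrier (Aut_mtree V E) \<longleftrightarrow>
      F permutes mt_verts V E \<and> (\<forall>u\<in>mt_verts V E. isl (F u) \<longleftrightarrow> isl u) \<and>
      map_prod F F ` mt_normal_edges V E = mt_normal_edges V E \<and>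
      map_prod F F ` mt_tree_edges V E = mt_tree_edges V E"
proof -
  have "F \<in> carrier (Aut_mtree V E) \<longleftrightarrow>
      F permutes mt_verts V E \<and> (\<forall>u\<in>mt_verts V E. isl (F u) \<longleftrightarrow> isl u) \<and>
      (\<forall>u\<in>mt_verts V E. \<forall>w\<in>mt_verts V E.
         (u, w) \<in> mt_normal_edges V E \<longleftrightarrow> (F u, F w) \<in> mt_normal_edges V E) \<and>
      (\<forall>u\<in>mt_verts V E. \<forall>w\<in>mt_verts V E.
         (u, w) \<in> mt_tree_edges V E \<longleftrightarrow> (F u, F w) \<in> mt_tree_edges V E)"
    by (simp only: Aut_mtree_def partial_object.select_convs mem_Collect_eq permutes_iff_bij_betw
        ball_conj_distrib conj_assoc)
  then show ?thesis
    using permutes_map_prod_image_eq_iff[OF _ assms(1), of F]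
      permutes_map_prod_image_eq_iff[OF _ assms(2), of F]
    by (cases "F permutes mt_verts V E") simp_all
qed

lemma simple_graph_image:
  assumes "inj g" and "simple_graph V E"
  shows "simple_graph (g ` V) (map_prod g g ` E)"
  using assms unfolding simple_graph_def sym_def irrefl_def by (auto simp: inj_eq)

definition tree_aut :: "'a set \<Rightarrow> ('a \<times> 'a) set \<Rightarrow> ('a \<Rightarrow> 'a) \<Rightarrow> 'a tvert \<Rightarrow> 'a tvert" where
  "tree_aut V E f = restrict_id (tvert_map f) (mt_verts V E)"

context
  fixes V :: "'a set" and E :: "('a \<times> 'a) set"
  assumes finite: "finite V" and graph: "simple_graph V E"
begin

private lemma edges_subset: "E \<subseteq> V \<times> V"
  using graph unfolding simple_graph_def by blast

private lemmas Aut_mtree_carrier =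
  Aut_mtree_carrier_iff[OF mt_normal_edges_subset[OF finite graph] mt_tree_edges_subset]

lemma tvert_map_aut_image:
  assumes "f \<in> carrier (Aut_graph V E)"
  shows "tvert_map f ` mt_verts V E = mt_verts V E"
    and "map_prod (tvert_map f) (tvert_map f) ` mt_normal_edges V E = mt_normal_edges V E"
    and "map_prod (tvert_map f) (tvert_map f) ` mt_tree_edges V E = mt_tree_edges V E"
proof -
  have f: "f permutes V" "map_prod f f ` E = E"
    using assms Aut_graph_carrier_iff[OF edges_subset] by blast+
  note images = mt_verts_image mt_normal_edges_image mt_tree_edges_image
  from images[OF permutes_bij[OF f(1)], of V E] show
    "tvert_map f ` mt_verts V E = mt_verts V E"
    "map_prod (tvert_map f) (tvert_map f) ` mt_normal_edges V E = mt_normal_edges V E"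
    "map_prod (tvert_map f) (tvert_map f) ` mt_tree_edges V E = mt_tree_edges V E"
    by (simp_all add: f permutes_image[OF f(1)])
qed

lemma tree_aut_carrier:
  assumes "f \<in> carrier (Aut_graph V E)"
  shows "tree_aut V E f \<in> carrier (Aut_mtree V E)"
proof -
  let ?T = "mt_verts V E"
  have f: "f permutes V"
    using assms Aut_graph_carrier_iff[OF edges_subset] by blast
  have "bij_betw (tvert_map f) ?T ?T"
    using tvert_map_aut_image(1)[OF assms] bij_is_inj[OF bij_tvert_map[OF permutes_bij[OF f]]]
    by (simp add: bij_betw_def inj_on_subset[OF _ subset_UNIV])
  then have "tree_aut V E f permutes ?T"
    unfolding tree_aut_def by (rule permutes_restrict_id)
  moreover have "map_prod (tree_aut V E f) (tree_aut V E f) ` R =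
      map_prod (tvert_map f) (tvert_map f) ` R" if "R \<subseteq> ?T \<times> ?T" for R
    using that unfolding tree_aut_def by (intro image_cong) auto
  ultimately show ?thesis
    unfolding Aut_mtree_carrier using tvert_map_aut_image[OF assms]
      mt_normal_edges_subset[OF finite graph] mt_tree_edges_subset[of V E]
    by (simp add: tree_aut_def)
qed

lemma tree_aut_mult:
  assumes "g \<in> carrier (Aut_graph V E)"
  shows "tree_aut V E (f \<circ> g) = tree_aut V E f \<circ> tree_aut V E g"
proof
  fix u
  show "tree_aut V E (f \<circ> g) u = (tree_aut V E f \<circ> tree_aut V E g) u"
  proof (cases "u \<in> mt_verts V E")
    case True
    then have "tvert_map g u \<in> mt_verts V E"
      using tvert_map_aut_image(1)[OF assms] by blast
    with True show ?thesis
      by (simp add: tree_aut_def tvert_map_comp)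
  qed (simp add: tree_aut_def)
qed

lemma tree_aut_inj_on: "inj_on (tree_aut V E) (carrier (Aut_graph V E))"
proof (rule inj_onI)
  fix f g assume f: "f \<in> carrier (Aut_graph V E)" and g: "g \<in> carrier (Aut_graph V E)"
    and eq: "tree_aut V E f = tree_aut V E g"
  show "f = g"
  proof
    fix v
    show "f v = g v"
    proof (cases "v \<in> V")
      case True
      then have "Inl v \<in> mt_verts V E"
        by (simp add: Inl_mem_mt_verts_iff)
      with fun_cong[OF eq, of "Inl v"] show ?thesis
        by (simp add: tree_aut_def)
    next
      case False
      with f g show ?thesis
        using Aut_graph_carrier_iff[OF edges_subset] by (metis permutes_not_in)
    qed
  qed
qed

lemma Aut_mtree_restricts_to_normal_vertices:
  assumes "F \<in> carrier (Aut_mtree V E)"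
  obtains f where "f permutes V" and "\<And>v. v \<in> V \<Longrightarrow> F (Inl v) = Inl (f v)"
proof -
  have F: "F permutes mt_verts V E" "\<forall>u\<in>mt_verts V E. isl (F u) \<longleftrightarrow> isl u"
    using assms unfolding Aut_mtree_carrier by blast+
  define f where "f v = (if v \<in> V then projl (F (Inl v)) else v)" for v
  have F_Inl: "F (Inl v) = Inl (f v) \<and> f v \<in> V" if "v \<in> V" for v
  proof -
    have "Inl v \<in> mt_verts V E"
      using that by (simp add: Inl_mem_mt_verts_iff)
    then have "F (Inl v) \<in> mt_verts V E" "isl (F (Inl v))"
      using F permutes_in_image[OF F(1)] by auto
    then show ?thesis
      using that by (cases "F (Inl v)") (auto simp: f_def Inl_mem_mt_verts_iff)
  qed
  have "f permutes V"
  proof (rule inj_imp_permutes[OF _ finite])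
    show "inj_on f V"
      using F_Inl permutes_inj[OF F(1)] by (metis injD inj_onI sum.inject(1))
  qed (use F_Inl f_def in auto)
  with F_Inl show ?thesis
    using that by blast
qed

lemma Aut_mtree_down_edges:
  assumes "F \<in> carrier (Aut_mtree V E)"
  shows "map_prod F F ` mt_down_edges V E = mt_down_edges V E"
proof -
  have F: "F permutes mt_verts V E" "map_prod F F ` mt_normal_edges V E = mt_normal_edges V E"
    "map_prod F F ` mt_tree_edges V E = mt_tree_edges V E"
    using assms unfolding Aut_mtree_carrier by blast+
  have inj: "inj (map_prod F F)"
    using permutes_inj[OF F(1)] by (simp add: prod.inj_map)
  have NE: "(F a, F b) \<in> mt_normal_edges V E \<longleftrightarrow> (a, b) \<in> mt_normal_edges V E"
    and TE: "(F a, F b) \<in> mt_tree_edges V E \<longleftrightarrow> (a, b) \<in> mt_tree_edges V E" for a b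
    using inj_image_mem_iff[OF inj, of "(a, b)" "mt_normal_edges V E"]
      inj_image_mem_iff[OF inj, of "(a, b)" "mt_tree_edges V E"] F(2,3)
    by simp_all
  have "F a \<in> Range (mt_tree_edges V E) \<longleftrightarrow> a \<in> Range (mt_tree_edges V E)" for a
    using TE permutes_surj[OF F(1)] by (metis Range.simps surjD)
  with NE TE show ?thesis
    unfolding mt_down_edges_def
    by (intro bij_map_prod_image_eqI[symmetric] permutes_bij[OF F(1)]) auto
qed

lemma Aut_mtree_marker:
  assumes F: "F \<in> carrier (Aut_mtree V E)" and f: "f permutes V"
    and F_Inl: "\<And>v. v \<in> V \<Longrightarrow> F (Inl v) = Inl (f v)"
    and P: "P \<in> dec_nodes V E" "P \<noteq> V"
  shows "F (Inr (P, c)) = Inr (f ` P, c)"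
proof -
  have TE: "map_prod F F ` mt_tree_edges V E = mt_tree_edges V E" and "inj F"
    using F permutes_inj unfolding Aut_mtree_carrier by blast+
  have "(Inr (P, True), Inr (P, False)) \<in> mt_tree_edges V E"
    using P unfolding mem_mt_tree_edges_iff by blast
  then have "map_prod F F (Inr (P, True), Inr (P, False)) \<in> map_prod F F ` mt_tree_edges V E"
    by (rule imageI)
  then have "(F (Inr (P, True)), F (Inr (P, False))) \<in> mt_tree_edges V E"
    by (simp add: TE)
  then obtain Q where Q: "Q \<in> dec_nodes V E" "Q \<noteq> V"
    and FQ: "F (Inr (P, True)) = Inr (Q, True)" "F (Inr (P, False)) = Inr (Q, False)"
    unfolding mem_mt_tree_edges_iff by blast
  txt \<open>F preserves the orientation of the tree, so it carries the normal vertices below m_P'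
    onto those below F m_P' = m_Q'.\<close>
  have P_iff: "v \<in> P \<longleftrightarrow> f v \<in> Q" if "v \<in> V" for v
  proof -
    have "v \<in> P \<longleftrightarrow> (Inr (P, False), Inl v) \<in> (mt_down_edges V E)\<^sup>*"
      using mt_down_reach_Inl_iff[OF finite graph P] by simp
    also have "\<dots> \<longleftrightarrow> (F (Inr (P, False)), F (Inl v)) \<in> (mt_down_edges V E)\<^sup>*"
      using rtrancl_map_prod_image_iff[OF \<open>inj F\<close>, of _ _ "mt_down_edges V E"]
      by (simp add: Aut_mtree_down_edges[OF F])
    also have "\<dots> \<longleftrightarrow> f v \<in> Q"
      using mt_down_reach_Inl_iff[OF finite graph Q] FQ F_Inl[OF that] by simp
    finally show ?thesis .
  qed
  have "Q = f ` P"
  proof (intro equalityI subsetI)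
    fix q assume "q \<in> Q"
    moreover obtain v where "v \<in> V" "q = f v"
      using \<open>q \<in> Q\<close> dec_nodes_subset[OF finite graph Q(1)] permutes_image[OF f] by blast
    ultimately show "q \<in> f ` P"
      using P_iff by blast
  next
    fix q assume "q \<in> f ` P"
    then show "q \<in> Q"
      using P_iff dec_nodes_subset[OF finite graph P(1)] by blast
  qed
  with FQ show ?thesis
    by (cases c) simp_all
qed

lemma Aut_mtree_eq_tree_aut:
  assumes F: "F \<in> carrier (Aut_mtree V E)" and f: "f permutes V"
    and F_Inl: "\<And>v. v \<in> V \<Longrightarrow> F (Inl v) = Inl (f v)"
  shows "F = tree_aut V E f"
proof
  fix u
  show "F u = tree_aut V E f u"
  proof (cases "u \<in> mt_verts V E")
    case True
    then show ?thesis
      using F_Inl Aut_mtree_marker[OF F f F_Inl]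
      by (cases u) (auto simp: tree_aut_def Inl_mem_mt_verts_iff Inr_mem_mt_verts_iff)
  next
    case False
    then show ?thesis
      using F permutes_not_in unfolding Aut_mtree_carrier tree_aut_def by fastforce
  qed
qed

lemma tree_aut_surj:
  assumes F: "F \<in> carrier (Aut_mtree V E)"
  obtains f where "f \<in> carrier (Aut_graph V E)" and "tree_aut V E f = F"
proof -
  obtain f where f: "f permutes V" and F_Inl: "\<And>v. v \<in> V \<Longrightarrow> F (Inl v) = Inl (f v)"
    using Aut_mtree_restricts_to_normal_vertices[OF F] by blast
  have F_eq: "F = tree_aut V E f"
    using Aut_mtree_eq_tree_aut[OF F f F_Inl] .
  have F_perm: "F permutes mt_verts V E"
    and F_NE: "map_prod F F ` mt_normal_edges V E = mt_normal_edges V E"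
    using F unfolding Aut_mtree_carrier by blast+
  have agree: "\<And>u. u \<in> mt_verts V E \<Longrightarrow> tvert_map f u = F u"
    by (simp add: F_eq tree_aut_def)
  let ?E' = "map_prod f f ` E"
  have "?E' = E"
  proof (rule mt_determines_edges[OF finite graph])
    have fV: "f ` V = V"
      by (rule permutes_image[OF f])
    show "simple_graph V ?E'"
      using simple_graph_image[OF permutes_inj[OF f] graph] by (simp add: fV)
    have "mt_verts V ?E' = tvert_map f ` mt_verts V E"
      using mt_verts_image[OF permutes_bij[OF f], of V E] by (simp add: fV)
    also have "\<dots> = mt_verts V E"
      using agree permutes_image[OF F_perm] by (metis image_cong)
    finally show "mt_verts V ?E' = mt_verts V E" .
    have "mt_normal_edges V ?E' = map_prod (tvert_map f) (tvert_map f) ` mt_normal_edges V E"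
      using mt_normal_edges_image[OF permutes_bij[OF f], of V E] by (simp add: fV)
    also have "\<dots> = map_prod F F ` mt_normal_edges V E"
      using agree mt_normal_edges_subset[OF finite graph] by (intro image_cong) auto
    finally show "mt_normal_edges V ?E' = mt_normal_edges V E"
      using F_NE by simp
  qed
  with f have "f \<in> carrier (Aut_graph V E)"
    using Aut_graph_carrier_iff[OF edges_subset] by blast
  with F_eq that show ?thesis
    by blast
qed

end

theorem mainTheorem2:
  fixes V :: "'a set" and E :: "('a \<times> 'a) set"
  assumes "finite V" and "simple_graph V E"
  shows "Aut_graph V E \<cong> Aut_mtree V E"
proof (rule is_isoI[OF isoI])
  show "tree_aut V E \<in> hom (Aut_graph V E) (Aut_mtree V E)"
    using tree_aut_carrier[OF assms] tree_aut_mult[OF assms]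
    by (intro homI) (simp_all add: Aut_graph_def Aut_mtree_def)
  have "tree_aut V E ` carrier (Aut_graph V E) = carrier (Aut_mtree V E)"
    using tree_aut_carrier[OF assms] tree_aut_surj[OF assms] by blast
  with tree_aut_inj_on[OF assms]
  show "bij_betw (tree_aut V E) (carrier (Aut_graph V E)) (carrier (Aut_mtree V E))"
    by (simp add: bij_betw_def)
qed

end
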